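(* Let $\zeta_3=\int_0^\infty \frac{\mathrm{d}t}{\sqrt{1+t^6}}$ and let $\mathrm{sleafh}_3:(-\zeta_3,\zeta_3)\to\mathbb{R}$ be the hyperbolic leaf function of basis $3$. For every $l\in(-\zeta_3,\zeta_3)$, writing $S=\mathrm{sleafh}_3(l)$, $$\Bigl(\mathrm{sleafh}_3\Bigl(\frac l2\Bigr)\Bigr)^2=-\frac12S^2-\frac12\sqrt{1-S^2+S^4}+\frac12\sqrt{-1+S^2+2S^4+\frac{2+2S^6}{\sqrt{1-S^2+S^4}}}.$$
   Context: For a natural number $n$, let $\zeta_n=\int_0^\infty \frac{\mathrm{d}t}{\sqrt{1+t^{2n}}}$. The hyperbolic leaf function $\mathrm{sleafh}_n$ is the solution $r(l)$ on $(-\zeta_n,\zeta_n)$ of $\frac{\mathrm{d}^2r}{\mathrm{d}l^2}=n\,r^{2n-1}$ with $r(0)=0$, $r'(0)=1$; equivalently it is the inverse function of $r\mapsto \int_0^r \frac{\mathrm{d}t}{\sqrt{1+t^{2n}}}$, $r\in\mathbb{R}$. *)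

theory Defs
  imports "HOL-Analysis.Analysis"
begin

definition leaf_zeta :: "nat \<Rightarrow> real" where
  "leaf_zeta n = integral {0..} (\<lambda>t. 1 / sqrt (1 + t ^ (2 * n)))"

definition leafh_int :: "nat \<Rightarrow> real \<Rightarrow> real" where
  "leafh_int n r = (if 0 \<le> r then integral {0..r} (\<lambda>t. 1 / sqrt (1 + t ^ (2 * n)))
                    else - integral {r..0} (\<lambda>t. 1 / sqrt (1 + t ^ (2 * n))))"

definition sleafh :: "nat \<Rightarrow> real \<Rightarrow> real" where
  "sleafh n l = (THE r. leafh_int n r = l)"

end

(* The proof rests on the duplication formula sleafh_3 (2 u) = D (sleafh_3 u), where
   D t = 2 t sqrt (1 + t^6) / sqrt (1 - 8 t^6) for t^2 < 1/2: the substitution r = D t turns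
   dr / sqrt (1 + r^6) into 2 dt / sqrt (1 + t^6), so leafh_int_3 (D t) = 2 leafh_int_3 t.
   As D maps [0, 1/sqrt 2) onto [0, oo), every s = sleafh_3 (l/2) satisfies s^2 < 1/2, and
   x = s^2, T = sleafh_3(l)^2 are related by T = 4 x (1 + x^3) / (1 - 8 x^3).  Inverting this
   relation: with c = (1 + 2 x^2) / (1 - 2 x) one finds sqrt (1 - T + T^2) = c - T, and the outer
   radicand of the formula equals (2 x + c)^2. *)

theory Submission
  imports Defs
begin

definition leaf_integrand :: "nat \<Rightarrow> real \<Rightarrow> real" where
  "leaf_integrand n t = 1 / sqrt (1 + t ^ (2 * n))"

lemma leaf_radicand_pos: "0 < 1 + (t::real) ^ (2 * n)"
proof -
  have "0 \<le> t ^ (2 * n)" by (simp add: power_mult)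
  then show ?thesis by linarith
qed

lemma leaf_integrand_pos: "0 < leaf_integrand n t"
  using leaf_radicand_pos[of t n] by (simp add: leaf_integrand_def)

lemma leaf_integrand_minus [simp]: "leaf_integrand n (- t) = leaf_integrand n t"
  by (simp add: leaf_integrand_def power_mult)

lemma continuous_on_leaf_integrand: "continuous_on S (leaf_integrand n)"
  unfolding leaf_integrand_def
  by (intro continuous_intros) (use leaf_radicand_pos in \<open>auto simp: less_imp_neq[symmetric]\<close>)

lemma leaf_integrand_integrable: "leaf_integrand n integrable_on {a..b}"
  by (intro integrable_continuous_real continuous_on_leaf_integrand)

lemma leafh_int_eq:
  "leafh_int n r =
     (if 0 \<le> r then integral {0..r} (leaf_integrand n) else - integral {r..0} (leaf_integrand n))"
  by (simp add: leafh_int_def leaf_integrand_def[abs_def])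

lemma leafh_int_0 [simp]: "leafh_int n 0 = 0"
  by (simp add: leafh_int_eq)

lemma leafh_int_eq_integral_diff:
  assumes "0 \<le> M" "- M \<le> r"
  shows "leafh_int n r = integral {-M..r} (leaf_integrand n) - integral {-M..0} (leaf_integrand n)"
proof (cases "0 \<le> r")
  case True
  have "integral {-M..0} (leaf_integrand n) + integral {0..r} (leaf_integrand n)
      = integral {-M..r} (leaf_integrand n)"
    by (rule Henstock_Kurzweil_Integration.integral_combine) (use assms True leaf_integrand_integrable in auto)
  then show ?thesis using True by (simp add: leafh_int_eq)
next
  case False
  have "integral {-M..r} (leaf_integrand n) + integral {r..0} (leaf_integrand n)
      = integral {-M..0} (leaf_integrand n)"
    by (rule Henstock_Kurzweil_Integration.integral_combine) (use assms False leaf_integrand_integrable in auto)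
  then show ?thesis using False by (simp add: leafh_int_eq)
qed

lemma has_real_derivative_leafh_int:
  "(leafh_int n has_real_derivative leaf_integrand n x) (at x)"
proof -
  define M where "M = \<bar>x\<bar> + 1"
  have M: "0 \<le> M" "- M < x" "x < M" by (auto simp: M_def)
  have "((\<lambda>y. integral {-M..y} (leaf_integrand n)) has_real_derivative leaf_integrand n x)
      (at x within {-M..M})"
    by (intro integral_has_real_derivative continuous_on_leaf_integrand) (auto simp: M_def)
  then have "((\<lambda>y. integral {-M..y} (leaf_integrand n) - integral {-M..0} (leaf_integrand n))
      has_real_derivative leaf_integrand n x) (at x)"
    by (auto simp: at_within_Icc_at M_def intro!: derivative_eq_intros)
  then show ?thesis
    by (rule has_field_derivative_transform_within_open[where S = "{-M<..<M}"])
       (use M leafh_int_eq_integral_diff[of M] in auto)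
qed

lemma continuous_on_leafh_int: "continuous_on S (leafh_int n)"
  using DERIV_isCont has_real_derivative_leafh_int continuous_at_imp_continuous_on by blast

lemma leafh_int_strict_mono: "strict_mono (leafh_int n)"
proof (rule strict_monoI)
  show "leafh_int n a < leafh_int n b" if "a < b" for a b
    by (rule DERIV_pos_imp_increasing[OF that])
       (use has_real_derivative_leafh_int leaf_integrand_pos in blast)
qed

lemma leafh_int_less_iff [simp]: "leafh_int n a < leafh_int n b \<longleftrightarrow> a < b"
  using leafh_int_strict_mono strict_mono_less by blast

lemma leafh_int_le_iff [simp]: "leafh_int n a \<le> leafh_int n b \<longleftrightarrow> a \<le> b"
  using leafh_int_strict_mono strict_mono_less_eq by blast

lemma leafh_int_eq_iff [simp]: "leafh_int n a = leafh_int n b \<longleftrightarrow> a = b"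
  using leafh_int_strict_mono strict_mono_eq by blast

lemma leafh_int_minus: "leafh_int n (- r) = - leafh_int n r"
proof -
  have "\<exists>c. \<forall>x\<in>UNIV. leafh_int n x + leafh_int n (- x) = c"
  proof (rule has_field_derivative_zero_constant)
    fix x :: real
    show "((\<lambda>x. leafh_int n x + leafh_int n (- x)) has_real_derivative 0) (at x within UNIV)"
      using DERIV_add[OF has_real_derivative_leafh_int[of n]
                   DERIV_chain2[OF has_real_derivative_leafh_int[of n] DERIV_minus[OF DERIV_ident]]]
      by simp
  qed auto
  then obtain c where "\<And>x. leafh_int n x + leafh_int n (- x) = c" by blast
  from this[of 0] this[of r] show ?thesis by simp
qed

lemma leafh_int_tendsto_leaf_zeta:
  assumes "leaf_integrand n integrable_on {0..}"
  shows "(\<lambda>k. leafh_int n (real k)) \<longlonglongrightarrow> leaf_zeta n"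
proof -
  define g where "g k x = (if x \<in> {..real k} then leaf_integrand n x else 0)" for k x
  have restrict: "{..real k} \<inter> {0..} = {0..real k}" for k by auto
  have "(\<lambda>k. integral {0..} (g k)) \<longlonglongrightarrow> integral {0..} (leaf_integrand n)"
  proof (rule dominated_convergence(2)[OF _ assms])
    show "g k integrable_on {0..}" for k
      unfolding g_def integrable_restrict_Int restrict by (rule leaf_integrand_integrable)
    show "norm (g k x) \<le> leaf_integrand n x" for k x
      using leaf_integrand_pos[of n x] by (simp add: g_def)
    show "(\<lambda>k. g k x) \<longlonglongrightarrow> leaf_integrand n x" for x
    proof (rule tendsto_eventually)
      obtain m where "x \<le> real m" using real_arch_simple by blast
      then show "\<forall>\<^sub>F k in sequentially. g k x = leaf_integrand n x"
        unfolding eventually_sequentially g_def by (intro exI[of _ m]) auto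
    qed
  qed
  moreover have "integral {0..} (g k) = leafh_int n (real k)" for k
    unfolding g_def integral_restrict_Int restrict by (simp add: leafh_int_eq)
  ultimately show ?thesis
    by (simp add: leaf_zeta_def leaf_integrand_def[abs_def])
qed

lemma exists_leafh_int_gt:
  assumes "l < leaf_zeta n"
  obtains r where "l < leafh_int n r"
proof (cases "leaf_integrand n integrable_on {0..}")
  case False
  then have "leaf_zeta n = 0"
    by (simp add: leaf_zeta_def leaf_integrand_def[abs_def] not_integrable_integral)
  with assms that[of 0] show ?thesis by simp
next
  case True
  from order_tendstoD(1)[OF leafh_int_tendsto_leaf_zeta[OF True] assms]
  show ?thesis using that by (auto simp: eventually_sequentially)
qed

lemma exists_leafh_int_lt:
  assumes "- leaf_zeta n < l"
  obtains r where "leafh_int n r < l"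
proof -
  obtain r where "- l < leafh_int n r"
    by (rule exists_leafh_int_gt[of "- l" n]) (use assms in auto)
  then show ?thesis using that[of "- r"] by (simp add: leafh_int_minus)
qed

lemma leafh_int_sleafh:
  assumes "l \<in> {- leaf_zeta n <..< leaf_zeta n}"
  shows "leafh_int n (sleafh n l) = l"
proof -
  obtain a where a: "leafh_int n a < l" using exists_leafh_int_lt assms by auto
  obtain b where b: "l < leafh_int n b" using exists_leafh_int_gt assms by auto
  have "a \<le> b" using less_trans[OF a b] by simp
  then obtain r where r: "leafh_int n r = l"
    using IVT'[of "leafh_int n" a l b] a b continuous_on_leafh_int by auto
  show ?thesis
    unfolding sleafh_def by (rule theI[of _ r]) (use r in auto)
qed

lemma sleafh_leafh_int [simp]: "sleafh n (leafh_int n r) = r"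
  unfolding sleafh_def by (simp only: leafh_int_eq_iff the_eq_trivial)

lemma leaf_integrand_3: "leaf_integrand 3 t = 1 / sqrt (1 + t ^ 6)"
  by (simp add: leaf_integrand_def)

definition leaf_double3 :: "real \<Rightarrow> real" where
  "leaf_double3 t = 2 * t * sqrt (1 + t ^ 6) / sqrt (1 - 8 * t ^ 6)"

lemma pow6_bounds_if_sq_less:
  assumes "t\<^sup>2 < 1/2"
  shows "0 \<le> (t::real) ^ 6" "t ^ 6 < 1/8"
proof -
  show "0 \<le> t ^ 6" by (rule zero_le_even_power) simp
  have "(t\<^sup>2) ^ 3 < (1/2) ^ 3"
    using assms by (intro power_strict_mono) auto
  then show "t ^ 6 < 1/8" by (simp add: power_mult[symmetric] power_divide)
qed

lemma has_real_derivative_leaf_double3: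
  assumes "t\<^sup>2 < 1/2"
  shows "(leaf_double3 has_real_derivative
     2 * (1 + 20 * t ^ 6 - 8 * (t ^ 6)\<^sup>2) / (sqrt (1 + t ^ 6) * sqrt (1 - 8 * t ^ 6) ^ 3)) (at t)"
proof -
  define u where "u = t ^ 6"
  have u: "0 \<le> u" "u < 1/8" "t * t ^ 5 = u"
    using pow6_bounds_if_sq_less[OF assms] by (auto simp: u_def eval_nat_numeral)
  define A where "A = sqrt (1 + u)"
  define B where "B = sqrt (1 - 8 * u)"
  have A: "A > 0" "A\<^sup>2 = 1 + u" using u by (auto simp: A_def)
  have B: "B > 0" "B\<^sup>2 = 1 - 8 * u" using u by (auto simp: B_def)
  have E: "(leaf_double3 has_real_derivative
      ((2 * A + 2 * t * (6 * t ^ 5 / (2 * A))) * B - 2 * t * A * (- (48 * t ^ 5) / (2 * B))) / B\<^sup>2) (at t)"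
    unfolding leaf_double3_def[abs_def] using u A B
    by (auto intro!: derivative_eq_intros simp: u_def A_def B_def field_simps)
  have "((2 * A + 2 * t * (6 * t ^ 5 / (2 * A))) * B - 2 * t * A * (- (48 * t ^ 5) / (2 * B))) / B\<^sup>2
      = (2 * A\<^sup>2 * B\<^sup>2 + 6 * (t * t ^ 5) * B\<^sup>2 + 48 * (t * t ^ 5) * A\<^sup>2) / (A * B ^ 3)"
    using A(1) B(1) by (simp add: field_simps power2_eq_square power3_eq_cube)
  also have "\<dots> = 2 * (1 + 20 * u - 8 * u\<^sup>2) / (A * B ^ 3)"
    unfolding u(3) A(2) B(2) by (simp add: algebra_simps power2_eq_square)
  finally show ?thesis using E by (simp add: A_def B_def u_def)
qed

lemma sqrt_one_plus_leaf_double3_pow6: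
  assumes "t\<^sup>2 < 1/2"
  shows "sqrt (1 + leaf_double3 t ^ 6) = (1 + 20 * t ^ 6 - 8 * (t ^ 6)\<^sup>2) / sqrt (1 - 8 * t ^ 6) ^ 3"
    and "0 < 1 + 20 * t ^ 6 - 8 * (t ^ 6)\<^sup>2"
proof -
  define u where "u = t ^ 6"
  have u: "0 \<le> u" "u < 1/8"
    using pow6_bounds_if_sq_less[OF assms] by (auto simp: u_def)
  define A where "A = sqrt (1 + u)"
  define B where "B = sqrt (1 - 8 * u)"
  have A: "A\<^sup>2 = 1 + u" using u by (auto simp: A_def)
  have B: "B > 0" "B\<^sup>2 = 1 - 8 * u" using u by (auto simp: B_def)
  define P where "P = 1 + 20 * u - 8 * u\<^sup>2"
  have "8 * u * u \<le> 1 * u" using u by (intro mult_right_mono) auto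
  then have P: "P > 0" using u unfolding P_def power2_eq_square by linarith
  then show "0 < 1 + 20 * t ^ 6 - 8 * (t ^ 6)\<^sup>2" by (simp add: P_def u_def)
  have "leaf_double3 t = 2 * t * A / B"
    by (simp add: leaf_double3_def A_def B_def u_def)
  then have "leaf_double3 t ^ 6 = 64 * u * (A\<^sup>2) ^ 3 / (B\<^sup>2) ^ 3"
    by (simp add: u_def power_divide power_mult_distrib power_mult[symmetric])
  then have "1 + leaf_double3 t ^ 6 = P\<^sup>2 / (1 - 8 * u) ^ 3"
    unfolding A B(2) P_def using u
    by (simp add: field_simps) (simp add: algebra_simps power2_eq_square power3_eq_cube)
  also have "\<dots> = (P / B ^ 3)\<^sup>2"
    by (simp add: power_divide power_mult[symmetric] B(2)[symmetric])
  finally have "1 + leaf_double3 t ^ 6 = (P / B ^ 3)\<^sup>2" .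
  then show "sqrt (1 + leaf_double3 t ^ 6) = (1 + 20 * t ^ 6 - 8 * (t ^ 6)\<^sup>2) / sqrt (1 - 8 * t ^ 6) ^ 3"
    using P B by (simp add: P_def B_def u_def)
qed

lemma has_real_derivative_leafh_int_3_leaf_double3:
  assumes "t\<^sup>2 < 1/2"
  shows "((\<lambda>t. leafh_int 3 (leaf_double3 t)) has_real_derivative 2 * leaf_integrand 3 t) (at t)"
proof -
  have "((\<lambda>t. leafh_int 3 (leaf_double3 t)) has_real_derivative
      leaf_integrand 3 (leaf_double3 t) *
      (2 * (1 + 20 * t ^ 6 - 8 * (t ^ 6)\<^sup>2) / (sqrt (1 + t ^ 6) * sqrt (1 - 8 * t ^ 6) ^ 3))) (at t)"
    by (rule DERIV_chain2[OF has_real_derivative_leafh_int has_real_derivative_leaf_double3[OF assms]])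
  moreover have "leaf_integrand 3 (leaf_double3 t) *
      (2 * (1 + 20 * t ^ 6 - 8 * (t ^ 6)\<^sup>2) / (sqrt (1 + t ^ 6) * sqrt (1 - 8 * t ^ 6) ^ 3))
      = 2 * leaf_integrand 3 t"
  proof -
    have cancel: "1 / (P / B ^ 3) * (2 * P / (A * B ^ 3)) = 2 * (1 / A)"
      if "P \<noteq> 0" "B \<noteq> 0" for P A B :: real
      using that by (simp add: field_simps)
    show ?thesis
      unfolding leaf_integrand_3 sqrt_one_plus_leaf_double3_pow6(1)[OF assms]
      by (rule cancel) (use sqrt_one_plus_leaf_double3_pow6(2)[OF assms] pow6_bounds_if_sq_less[OF assms] in auto)
  qed
  ultimately show ?thesis by simp
qed

lemma sq_less_half_iff: "x\<^sup>2 < 1/2 \<longleftrightarrow> x \<in> {- sqrt (1/2) <..< sqrt (1/2)}"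
proof -
  have "x\<^sup>2 < 1/2 \<longleftrightarrow> sqrt (x\<^sup>2) < sqrt (1/2)" by (simp only: real_sqrt_less_iff)
  then show ?thesis by auto
qed

lemma leafh_int_3_leaf_double3:
  assumes "t\<^sup>2 < 1/2"
  shows "leafh_int 3 (leaf_double3 t) = 2 * leafh_int 3 t"
proof -
  have "\<exists>c. \<forall>x\<in>{- sqrt (1/2) <..< sqrt (1/2)}. leafh_int 3 (leaf_double3 x) - 2 * leafh_int 3 x = c"
  proof (rule has_field_derivative_zero_constant)
    fix x assume "x \<in> {- sqrt (1/2) <..< sqrt (1/2)}"
    then have "x\<^sup>2 < 1/2" by (simp only: sq_less_half_iff)
    then have "((\<lambda>x. leafh_int 3 (leaf_double3 x) - 2 * leafh_int 3 x) has_real_derivative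
        2 * leaf_integrand 3 x - 2 * leaf_integrand 3 x) (at x)"
      by (intro DERIV_diff has_real_derivative_leafh_int_3_leaf_double3 DERIV_cmult
          has_real_derivative_leafh_int)
    then show "((\<lambda>x. leafh_int 3 (leaf_double3 x) - 2 * leafh_int 3 x) has_real_derivative 0)
        (at x within {- sqrt (1/2) <..< sqrt (1/2)})"
      by (simp add: has_field_derivative_at_within)
  qed auto
  then obtain c where c: "\<And>x. x\<^sup>2 < 1/2 \<Longrightarrow> leafh_int 3 (leaf_double3 x) - 2 * leafh_int 3 x = c"
    using sq_less_half_iff by blast
  have "c = 0" using c[of 0] by (simp add: leaf_double3_def)
  then show ?thesis using c[OF assms] by simp
qed

lemma leaf_double3_unbounded: "\<exists>t. 0 \<le> t \<and> t\<^sup>2 < 1/2 \<and> r \<le> leaf_double3 t"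
proof -
  define e where "e = 1 / (\<bar>r\<bar> + 2)\<^sup>2"
  have e0: "0 < e" by (simp add: e_def)
  have "4 \<le> (\<bar>r\<bar> + 2)\<^sup>2"
    using power_mono[of 2 "\<bar>r\<bar> + 2" 2] by simp
  then have e1: "e \<le> 1/4" unfolding e_def by (simp add: field_simps)
  \<comment> \<open>chosen so that \<open>sqrt (1 - 8 * t ^ 6) = 1 / (\<bar>r\<bar> + 2)\<close>\<close>
  define t where "t = root 6 ((1 - e) / 8)"
  have t0: "0 \<le> t" using e1 by (simp add: t_def)
  have t6: "t ^ 6 = (1 - e) / 8" unfolding t_def using e1 by (simp add: real_root_pow_pos2)
  have "(1/2) ^ 6 \<le> t ^ 6" unfolding t6 using e1 by (simp add: power_divide)
  then have t_ge: "1/2 \<le> t" using t0 power_le_imp_le_base[of "1/2" 5 t] by (simp add: eval_nat_numeral)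
  have "t\<^sup>2 < 1/2"
  proof (rule ccontr)
    assume "\<not> t\<^sup>2 < 1/2"
    then have "(1/2) ^ 3 \<le> (t\<^sup>2) ^ 3" by (intro power_mono) auto
    then have "1/8 \<le> t ^ 6" by (simp add: power_mult[symmetric] power_divide)
    then show False using t6 e0 by simp
  qed
  moreover have "r \<le> leaf_double3 t"
  proof -
    have "1 - 8 * t ^ 6 = (1 / (\<bar>r\<bar> + 2))\<^sup>2"
      unfolding t6 e_def by (simp add: power_divide field_simps)
    then have "leaf_double3 t = 2 * t * sqrt (1 + t ^ 6) * (\<bar>r\<bar> + 2)"
      by (simp add: leaf_double3_def)
    also have "\<dots> \<ge> 1 * 1 * (\<bar>r\<bar> + 2)"
      using t_ge pow6_bounds_if_sq_less[OF \<open>t\<^sup>2 < 1/2\<close>] by (intro mult_mono) auto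
    finally show ?thesis by simp
  qed
  ultimately show ?thesis using t0 by blast
qed

lemma leafh_int_3_less_twice_sqrt_half: "leafh_int 3 r < 2 * leafh_int 3 (sqrt (1/2))"
proof -
  obtain t where t: "0 \<le> t" "t\<^sup>2 < 1/2" "r \<le> leaf_double3 t"
    using leaf_double3_unbounded by blast
  have "leafh_int 3 r \<le> leafh_int 3 (leaf_double3 t)" using t(3) by simp
  also have "\<dots> = 2 * leafh_int 3 t" using leafh_int_3_leaf_double3[OF t(2)] .
  also have "\<dots> < 2 * leafh_int 3 (sqrt (1/2))" using t(1,2) sq_less_half_iff[of t] by simp
  finally show ?thesis .
qed

lemma sleafh_3_half_sq_less:
  assumes "l \<in> {- leaf_zeta 3 <..< leaf_zeta 3}"
  shows "(sleafh 3 (l / 2))\<^sup>2 < 1/2"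
proof -
  define s where "s = sleafh 3 (l / 2)"
  have s: "leafh_int 3 s = l / 2"
    unfolding s_def using assms by (intro leafh_int_sleafh) auto
  obtain a where "leafh_int 3 a < l" using assms exists_leafh_int_lt by auto
  then have "leafh_int 3 (- s) < leafh_int 3 (sqrt (1/2))"
    using s leafh_int_3_less_twice_sqrt_half[of "- a"] by (simp add: leafh_int_minus)
  moreover obtain b where "l < leafh_int 3 b" using assms exists_leafh_int_gt by auto
  then have "leafh_int 3 s < leafh_int 3 (sqrt (1/2))"
    using s leafh_int_3_less_twice_sqrt_half[of b] by linarith
  ultimately show ?thesis using sq_less_half_iff[of s] by (simp add: s_def)
qed

lemma sleafh_3_double:
  assumes "l \<in> {- leaf_zeta 3 <..< leaf_zeta 3}"
  shows "sleafh 3 l = leaf_double3 (sleafh 3 (l / 2))"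
proof -
  have "l = 2 * leafh_int 3 (sleafh 3 (l / 2))"
    using assms by (subst leafh_int_sleafh) auto
  also have "\<dots> = leafh_int 3 (leaf_double3 (sleafh 3 (l / 2)))"
    using leafh_int_3_leaf_double3[OF sleafh_3_half_sq_less[OF assms]] by simp
  finally show ?thesis by (metis sleafh_leafh_int)
qed

lemma leaf_double3_sq:
  assumes "t\<^sup>2 < 1/2"
  shows "(leaf_double3 t)\<^sup>2 = 4 * t\<^sup>2 * (1 + (t\<^sup>2) ^ 3) / (1 - 8 * (t\<^sup>2) ^ 3)"
  using pow6_bounds_if_sq_less[OF assms]
  by (simp add: leaf_double3_def power_divide power_mult_distrib power_mult[symmetric])

lemma duplication_sq_inverse:
  fixes x T :: real
  assumes "0 \<le> x" "x < 1/2" and T: "T = 4 * x * (1 + x ^ 3) / (1 - 8 * x ^ 3)"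
  shows "x = - (1/2) * T - (1/2) * sqrt (1 - T + T\<^sup>2)
        + (1/2) * sqrt (- 1 + T + 2 * T\<^sup>2 + (2 + 2 * T ^ 3) / sqrt (1 - T + T\<^sup>2))"
proof -
  define c where "c = (1 + 2 * x\<^sup>2) / (1 - 2 * x)"
  define d where "d = 1 + 2 * x + 4 * x\<^sup>2"
  have d: "d > 0" using assms by (simp add: d_def add_pos_nonneg)
  have x1: "1 - 2 * x > 0" using assms by simp
  have "1 - 8 * x ^ 3 = (1 - 2 * x) * d"
    by (simp add: d_def algebra_simps power2_eq_square power3_eq_cube)
  then have Td: "T * ((1 - 2 * x) * d) = 4 * x * (1 + x ^ 3)"
    using T x1 d by simp
  have c: "c * (1 - 2 * x) = 1 + 2 * x\<^sup>2" using x1 by (simp add: c_def)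
  have "T * (2 * c - 1) * ((1 - 2 * x)\<^sup>2 * d) = (c\<^sup>2 - 1) * ((1 - 2 * x)\<^sup>2 * d)"
    using c Td unfolding d_def by algebra
  then have cT: "T * (2 * c - 1) = c\<^sup>2 - 1" using x1 d by simp
  have "(c - T) * ((1 - 2 * x) * d) = 1 - 2 * x + 6 * x\<^sup>2 + 4 * x ^ 3 + 4 * x ^ 4"
    using c Td unfolding d_def by algebra
  moreover have "1 - 2 * x + 6 * x\<^sup>2 + 4 * x ^ 3 + 4 * x ^ 4 > 0"
    using assms by (simp add: add_pos_nonneg)
  ultimately have "0 < (c - T) * ((1 - 2 * x) * d)" by simp
  then have c_gt_T: "c - T > 0" using zero_less_mult_pos2 x1 d mult_pos_pos by blast
  have sq: "(c - T)\<^sup>2 = 1 - T + T\<^sup>2" using cT by (simp add: algebra_simps power2_eq_square)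
  then have sqrt_c: "sqrt (1 - T + T\<^sup>2) = c - T"
    using c_gt_T by (metis less_imp_le real_sqrt_unique)
  have "2 + 2 * T ^ 3 = 2 * (1 + T) * (c - T)\<^sup>2"
    unfolding sq by (simp add: algebra_simps power2_eq_square power3_eq_cube)
  then have "(2 + 2 * T ^ 3) / sqrt (1 - T + T\<^sup>2) = 2 * (1 + T) * (c - T)"
    unfolding sqrt_c using c_gt_T by (simp add: field_simps power2_eq_square)
  then have "- 1 + T + 2 * T\<^sup>2 + (2 + 2 * T ^ 3) / sqrt (1 - T + T\<^sup>2) = (2 * x + c)\<^sup>2"
    using c cT by algebra
  moreover have "c > 0" unfolding c_def using x1 by (simp add: add_pos_nonneg)
  ultimately have "sqrt (- 1 + T + 2 * T\<^sup>2 + (2 + 2 * T ^ 3) / sqrt (1 - T + T\<^sup>2)) = 2 * x + c"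
    using assms by simp
  then show ?thesis unfolding sqrt_c by (simp add: field_simps)
qed

theorem mainTheorem16:
  fixes l :: real
  assumes "l \<in> {- leaf_zeta 3 <..< leaf_zeta 3}"
  shows "(sleafh 3 (l / 2))\<^sup>2 =
     (let S = sleafh 3 l in
        - (1/2) * S\<^sup>2 - (1/2) * sqrt (1 - S\<^sup>2 + S ^ 4)
        + (1/2) * sqrt (- 1 + S\<^sup>2 + 2 * S ^ 4 + (2 + 2 * S ^ 6) / sqrt (1 - S\<^sup>2 + S ^ 4)))"
proof -
  define s where "s = sleafh 3 (l / 2)"
  define S where "S = sleafh 3 l"
  have s: "s\<^sup>2 < 1/2" unfolding s_def using sleafh_3_half_sq_less[OF assms] .
  have "S\<^sup>2 = 4 * s\<^sup>2 * (1 + (s\<^sup>2) ^ 3) / (1 - 8 * (s\<^sup>2) ^ 3)"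
    unfolding S_def sleafh_3_double[OF assms] s_def[symmetric] by (rule leaf_double3_sq[OF s])
  moreover have "S ^ 4 = (S\<^sup>2)\<^sup>2" "S ^ 6 = (S\<^sup>2) ^ 3"
    by (simp_all add: power_mult[symmetric])
  ultimately show ?thesis
    unfolding Let_def S_def[symmetric] s_def[symmetric]
    using duplication_sq_inverse[of "s\<^sup>2" "S\<^sup>2"] s by simp
qed

end
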